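(* Let $k$ be a field, $V$ a finite-dimensional $k$-vector space, $A$ a finite arrangement of linear hyperplanes in $V$ with intersection lattice $L$ and natural sheaf $F$, and let $\widetilde L$ be the Boolean cover of $L$. Then $$\chi_q\,\mathrm{HC}_*(\widetilde L;\Lambda^\bullet F)=\chi_L(1+q).$$
   Context: $L$ consists of all intersections of subsets of $A$ (empty intersection $=V$), ordered by reverse inclusion, with minimum $\mathbf{0}=V$; atoms are the hyperplanes. Möbius function: $\mu_L(x,x)=1$, $\mu_L(x,y)=-\sum_{x\le z<y}\mu_L(x,z)$; $\chi_L(t)=\sum_{x\in L}\mu_L(\mathbf{0},x)t^{\dim x}$. A sheaf assigns a vector space $G(x)$ to each element and a linear map $G^y_x:G(y)\to G(x)$ to each $x\le y$, functorially. Natural sheaf: $F(x)=x$, $F^y_x$ the inclusion $y\subseteq x$; $\Lambda^jF$ has $(\Lambda^jF)(x)=\Lambda^j(F(x))$, maps $\Lambda^j(F^y_x)$; $\Lambda^\bullet F=\bigoplus_{j\ge0}\Lambda^jF$. Graded Euler characteristic: $\chi_q\,\mathrm{HC}_*(\widetilde L;\Lambda^\bullet F)=\sum_{k\ge0}q^k\sum_n(-1)^n\dim\mathrm{HC}_n(\widetilde L;\Lambda^kF)$. Boolean cover: $\widetilde L$ is the lattice of subsets of $A$ under inclusion, $f(S)=\bigcap_{a\in S}a$, induced sheaf $G(S)=G(f(S))$ with maps $G^{f(T)}_{f(S)}$. Cellular homology of a Boolean lattice of subsets of $\{a_1,\dots,a_n\}$ with sheaf $G$: homology of $C_k=\bigoplus_{|x|=k}G(x)$,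 $d=\sum\varepsilon^x_yG^x_y$ over $y\subset x$, $|y|=|x|-1$, with $\varepsilon^x_y=(-1)^{j-1}$ when $x=\{a_{i_1},\dots,a_{i_k}\}$ ($i_1<\cdots<i_k$), $y=x\setminus\{a_{i_j}\}$. *)

theory Defs
  imports Main "HOL-Library.Function_Algebras" "HOL-Combinatorics.Permutations"
    "HOL-Computational_Algebra.Polynomial"
begin

definition fscale :: "'k::field \<Rightarrow> ('a \<Rightarrow> 'k) \<Rightarrow> ('a \<Rightarrow> 'k)" where
  "fscale c f = (\<lambda>x. c * f x)"

definition cscale :: "'k::field \<Rightarrow> ('a \<Rightarrow> 'b \<Rightarrow> 'k) \<Rightarrow> ('a \<Rightarrow> 'b \<Rightarrow> 'k)" where
  "cscale c F = (\<lambda>S I. c * F S I)"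

(* V = k^n, vectors as nat-indexed functions supported in {..<n} *)
definition ambient :: "nat \<Rightarrow> (nat \<Rightarrow> 'k::field) set" where
  "ambient n = {v. \<forall>i\<ge>n. v i = 0}"

definition hyperplane :: "nat \<Rightarrow> (nat \<Rightarrow> 'k::field) set \<Rightarrow> bool" where
  "hyperplane n H \<longleftrightarrow> (\<exists>a\<in>ambient n. a \<noteq> 0 \<and>
      H = {v \<in> ambient n. (\<Sum>i<n. a i * v i) = 0})"

(* The arrangement A is given as a list of distinct hyperplanes, i.e. with an enumeration a_1..a_N *)
definition arrangement :: "nat \<Rightarrow> (nat \<Rightarrow> 'k::field) set list \<Rightarrow> bool" where
  "arrangement n as \<longleftrightarrow> distinct as \<and> (\<forall>H\<in>set as. hyperplane n H)"

(* f(S) = intersection of the hyperplanes indexed by S (empty intersection = V) *)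
definition isect :: "nat \<Rightarrow> (nat \<Rightarrow> 'k::field) set list \<Rightarrow> nat set \<Rightarrow> (nat \<Rightarrow> 'k) set" where
  "isect n as S = ambient n \<inter> \<Inter> ((!) as ` S)"

definition lattice :: "nat \<Rightarrow> (nat \<Rightarrow> 'k::field) set list \<Rightarrow> (nat \<Rightarrow> 'k) set set" where
  "lattice n as = isect n as ` Pow {..<length as}"

definition subspace_dim :: "(nat \<Rightarrow> 'k::field) set \<Rightarrow> nat" where
  "subspace_dim W = vector_space.dim (fscale :: 'k \<Rightarrow> (nat \<Rightarrow> 'k) \<Rightarrow> _) W"

(* Moebius function mu_L(0, -) on L ordered by reverse inclusion, 0 = V:
   mu(0,0) = 1, mu(0,y) = - sum_{0 <= z < y} mu(0,z)  (z < y iff y strictly contained in z) *)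
definition mobius0 :: "nat \<Rightarrow> (nat \<Rightarrow> 'k::field) set list \<Rightarrow> (nat \<Rightarrow> 'k) set \<Rightarrow> int" where
  "mobius0 n as = (THE m. (\<forall>y. y \<notin> lattice n as \<longrightarrow> m y = 0) \<and>
     (\<forall>y\<in>lattice n as. m y = (if y = ambient n then 1
        else - (\<Sum>z\<in>{z\<in>lattice n as. y \<subset> z}. m z))))"

definition char_poly :: "nat \<Rightarrow> (nat \<Rightarrow> 'k::field) set list \<Rightarrow> int poly" where
  "char_poly n as = (\<Sum>x\<in>lattice n as. monom (mobius0 n as x) (subspace_dim x))"

(* Exterior power Lambda^j(k^n) modelled as functions on j-subsets of {..<n}
   (Pluecker coordinates); wedge of v_0..v_{j-1} has the j x j minors as coordinates *)
definition wedge :: "nat \<Rightarrow> nat \<Rightarrow> (nat \<Rightarrow> nat \<Rightarrow> 'k::field) \<Rightarrow> nat set \<Rightarrow> 'k" where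
  "wedge n j vs I = (if I \<subseteq> {..<n} \<and> card I = j then
      (\<Sum>p | p permutes {..<j}. of_int (sign p) *
          (\<Prod>a<j. vs a (sorted_list_of_set I ! p a)))
    else 0)"

(* Lambda^j(W) for a subspace W of V, as a subspace of Lambda^j(V);
   the maps Lambda^j(F^y_x) are then the inclusions *)
definition ext_pow :: "nat \<Rightarrow> nat \<Rightarrow> (nat \<Rightarrow> 'k::field) set \<Rightarrow> (nat set \<Rightarrow> 'k) set" where
  "ext_pow n j W = module.span fscale {wedge n j vs | vs. \<forall>a<j. vs a \<in> W}"

(* cellular chains of the Boolean cover with coefficients in Lambda^j F:
   C_m = (+)_{S subset of {0..N-1}, |S| = m} Lambda^j(f(S)) *)
definition chains :: "nat \<Rightarrow> (nat \<Rightarrow> 'k::field) set list \<Rightarrow> nat \<Rightarrow> nat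
     \<Rightarrow> (nat set \<Rightarrow> nat set \<Rightarrow> 'k) set" where
  "chains n as j m = {c. (\<forall>S. S \<subseteq> {..<length as} \<and> card S = m \<longrightarrow> c S \<in> ext_pow n j (isect n as S))
      \<and> (\<forall>S. \<not> (S \<subseteq> {..<length as} \<and> card S = m) \<longrightarrow> c S = 0)}"

(* cellular boundary: (d c)(T) = sum_{x = T + {a_i}} eps^x_T c(x), eps = (-1)^{position of i in x - 1} *)
definition bdry :: "nat \<Rightarrow> (nat set \<Rightarrow> nat set \<Rightarrow> 'k::field) \<Rightarrow> (nat set \<Rightarrow> nat set \<Rightarrow> 'k)" where
  "bdry N c = (\<lambda>T I. \<Sum>i\<in>{..<N} - T. (-1) ^ card {t\<in>T. t < i} * c (insert i T) I)"

definition cycles :: "nat \<Rightarrow> (nat \<Rightarrow> 'k::field) set list \<Rightarrow> nat \<Rightarrow> nat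
     \<Rightarrow> (nat set \<Rightarrow> nat set \<Rightarrow> 'k) set" where
  "cycles n as j m = {c \<in> chains n as j m. bdry (length as) c = 0}"

definition boundaries :: "nat \<Rightarrow> (nat \<Rightarrow> 'k::field) set list \<Rightarrow> nat \<Rightarrow> nat
     \<Rightarrow> (nat set \<Rightarrow> nat set \<Rightarrow> 'k) set" where
  "boundaries n as j m = bdry (length as) ` chains n as j (Suc m)"

definition homology_dim :: "nat \<Rightarrow> (nat \<Rightarrow> 'k::field) set list \<Rightarrow> nat \<Rightarrow> nat \<Rightarrow> int" where
  "homology_dim n as j m =
     int (vector_space.dim (cscale :: 'k \<Rightarrow> _) (cycles n as j m))
   - int (vector_space.dim (cscale :: 'k \<Rightarrow> _) (boundaries n as j m))"

(* coefficient of q^j in the graded Euler characteristic; chain groups vanish in degrees > |A| *)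
definition euler_coeff :: "nat \<Rightarrow> (nat \<Rightarrow> 'k::field) set list \<Rightarrow> nat \<Rightarrow> int" where
  "euler_coeff n as j = (\<Sum>m\<le>length as. (-1) ^ m * homology_dim n as j m)"

end

theory Submission
  imports Defs "HOL-Library.Indicator_Function" "Jordan_Normal_Form.Determinant"
begin

(*
  By rank-nullity, the alternating sum of the homology dimensions of a finite complex equals
  that of its chain groups. In degree m the chain group is the direct sum of Lambda^j f(S) over
  the m-element sets S of hyperplanes, and dim Lambda^j W = (dim W choose j): the j-fold wedges
  of a basis of W, extended to a basis of V, span Lambda^j W, and they are independent because
  their span contains the (n choose j) independent coordinate vectors of Lambda^j V.
  Grouping the sets S by x = f(S) turns the Euler characteristic into
  sum_x (sum_{f(S) = x} (-1)^|S|) (dim x choose j). The inner sum is mu(0, x) by Whitney's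
  formula: for x <> V, the sets S with x contained in f(S) are exactly the subsets of the
  nonempty set of hyperplanes containing x, so their alternating count vanishes. Finally,
  (dim x choose j) is the coefficient of q^j in (1 + q)^(dim x).
*)

section \<open>Linear algebra in function spaces\<close>

interpretation fsv: vector_space "fscale :: 'k::field \<Rightarrow> ('a \<Rightarrow> 'k) \<Rightarrow> ('a \<Rightarrow> 'k)"
  by unfold_locales (auto simp: fscale_def fun_eq_iff algebra_simps)

interpretation csv: vector_space "cscale :: 'k::field \<Rightarrow> ('a \<Rightarrow> 'b \<Rightarrow> 'k) \<Rightarrow> ('a \<Rightarrow> 'b \<Rightarrow> 'k)"
  by unfold_locales (auto simp: cscale_def fun_eq_iff algebra_simps)

interpretation ff: vector_space_pair "fscale :: 'k::field \<Rightarrow> ('a \<Rightarrow> 'k) \<Rightarrow> _"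
  "fscale :: 'k::field \<Rightarrow> ('b \<Rightarrow> 'k) \<Rightarrow> _" ..

interpretation fc: vector_space_pair "fscale :: 'k::field \<Rightarrow> ('b \<Rightarrow> 'k) \<Rightarrow> _"
  "cscale :: 'k::field \<Rightarrow> ('a \<Rightarrow> 'b \<Rightarrow> 'k) \<Rightarrow> _" ..

interpretation cf: vector_space_pair "cscale :: 'k::field \<Rightarrow> ('a \<Rightarrow> 'b \<Rightarrow> 'k) \<Rightarrow> _"
  "fscale :: 'k::field \<Rightarrow> ('b \<Rightarrow> 'k) \<Rightarrow> _" ..

lemma sum_fun_apply: "(\<Sum>x\<in>A. f x) i = (\<Sum>x\<in>A. f x i)"
  by (induction A rule: infinite_finite_induct) auto

(* Not [simp]: the simplifier would also rewrite the eta-expanded fscale inside fsv.dim etc. *)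
lemma fscale_apply: "fscale c f x = c * f x"
  by (simp add: fscale_def)

lemma cscale_component: "cscale c F S = fscale c (F S)"
  by (simp add: cscale_def fscale_def)

lemma (in vector_space) independent_if_span_contains_independent:
  assumes "finite G" "S \<subseteq> span G" "independent S" "card G \<le> card S"
  shows "independent G"
proof
  assume "dependent G"
  then obtain g where g: "g \<in> G" "g \<in> span (G - {g})"
    unfolding dependent_def by blast
  then have "span G = span (G - {g})"
    by (metis insert_Diff span_redundant)
  then have "card S \<le> card (G - {g})"
    using assms independent_span_bound[of "G - {g}" S] by auto
  also have "\<dots> < card G"
    using assms(1) g(1) by (rule card_Diff1_less)
  finally show False
    using assms(4) by simp
qed

lemma (in vector_space) eq_0_if_in_span_of_disjoint_subsets:
  assumes "independent B" "A1 \<subseteq> B" "A2 \<subseteq> B" "A1 \<inter> A2 = {}"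
    and "x \<in> span A1" "x \<in> span A2"
  shows "x = 0"
proof -
  have "representation B x = representation A1 x" "representation B x = representation A2 x"
    using assms by (auto intro: representation_extend)
  then have "representation B x = (\<lambda>b. 0)"
    using representation_ne_zero[of A1 x] representation_ne_zero[of A2 x] assms(4)
    by (metis disjoint_iff)
  moreover have "x \<in> span B"
    using assms(2,5) span_mono by blast
  ultimately show ?thesis
    using sum_nonzero_representation_eq[OF assms(1)] by force
qed

lemma (in vector_space) dim_le_0_if_subset_zero: "V \<subseteq> {0} \<Longrightarrow> dim V = 0"
  using dim_le_card[of V "{}"] by simp

lemma (in vector_space_pair) dim_image_add_dim_kernel:
  assumes f: "Vector_Spaces.linear s1 s2 f" and V: "vs1.subspace V"
    and B0: "finite B0" "V \<subseteq> vs1.span B0"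
  shows "vs2.dim (f ` V) + vs1.dim {x\<in>V. f x = 0} = vs1.dim V"
proof -
  define K where "K = {x\<in>V. f x = 0}"
  obtain BK where BK: "BK \<subseteq> K" "vs1.independent BK" "K \<subseteq> vs1.span BK" "card BK = vs1.dim K"
    by (rule vs1.basis_exists)
  obtain B where B: "BK \<subseteq> B" "B \<subseteq> V" "vs1.independent B" "V \<subseteq> vs1.span B"
    using vs1.maximal_independent_subset_extend[of BK V] BK by (auto simp: K_def)
  have "finite B"
    using vs1.independent_span_bound[OF B0(1) B(3)] B(2) B0(2) by blast
  define C where "C = B - BK"
  have "x = 0" if x: "x \<in> vs1.span C" "f x = 0" for x
  proof (rule vs1.eq_0_if_in_span_of_disjoint_subsets[OF B(3), of C BK])
    have "vs1.span C \<subseteq> V"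
      using B(2) V by (intro vs1.span_minimal) (auto simp: C_def)
    then show "x \<in> vs1.span BK"
      using x BK(3) by (auto simp: K_def)
  qed (use x B(1) in \<open>auto simp: C_def\<close>)
  then have inj: "inj_on f (vs1.span C)"
    using linear_inj_on_iff_eq_0[OF f vs1.subspace_span] by blast
  have "vs2.dim (f ` V) = card (f ` C)"
  proof (rule vs2.dim_unique)
    show "vs2.independent (f ` C)"
      using linear_independent_injective_image[OF f _ inj] B(3) vs1.independent_mono
      by (auto simp: C_def)
    have "f ` V \<subseteq> vs2.span (f ` B)"
      using linear_spans_image[OF f B(4)] .
    also have "\<dots> \<subseteq> vs2.span (insert 0 (f ` C))"
      using B(1) BK(1) by (intro vs2.span_mono) (auto simp: C_def K_def)
    finally show "f ` V \<subseteq> vs2.span (f ` C)"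
      by (simp add: vs2.span_insert_0)
  qed (use B(2) in \<open>auto simp: C_def\<close>)
  also have "\<dots> = card C"
    using inj_on_subset[OF inj vs1.span_superset] by (rule card_image)
  also have "\<dots> = card B - card BK"
    using B(1) \<open>finite B\<close> by (simp add: C_def card_Diff_subset finite_subset)
  finally show ?thesis
    using vs1.basis_card_eq_dim[OF B(2,4,3)] BK(4) card_mono[OF \<open>finite B\<close> B(1)]
    by (simp add: K_def)
qed

lemma (in vector_space) alternating_sum_dim_homology:
  fixes C :: "nat \<Rightarrow> 'b set"
  assumes d: "Vector_Spaces.linear scale scale d"
    and C: "\<And>m. subspace (C m)" "\<And>m. \<exists>B. finite B \<and> C m \<subseteq> span B"
    and cycles_0: "\<And>c. c \<in> C 0 \<Longrightarrow> d c = 0" and top: "C (Suc N) \<subseteq> {0}"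
  shows "(\<Sum>m\<le>N. (-1) ^ m * (int (dim {c \<in> C m. d c = 0}) - int (dim (d ` C (Suc m)))))
       = (\<Sum>m\<le>N. (-1) ^ m * int (dim (C m)))"
proof -
  interpret vector_space_pair scale scale ..
  have rank_nullity: "int (dim (C (Suc m))) = int (dim (d ` C (Suc m))) + int (dim {c \<in> C (Suc m). d c = 0})" for m
    using C dim_image_add_dim_kernel[OF d] by (metis of_nat_add)
  have "(\<Sum>m\<le>M. (-1) ^ m * (int (dim {c \<in> C m. d c = 0}) - int (dim (d ` C (Suc m)))))
      = (\<Sum>m\<le>M. (-1) ^ m * int (dim (C m))) - (-1) ^ M * int (dim (d ` C (Suc M)))" for M
  proof (induction M)
    case 0
    have "{c \<in> C 0. d c = 0} = C 0"
      using cycles_0 by blast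
    then show ?case
      by simp
  next
    case (Suc M)
    then show ?case
      using rank_nullity[of M] by (simp add: algebra_simps)
  qed
  moreover have "dim (d ` C (Suc N)) = 0"
    using top linear_0[OF d] by (intro dim_le_0_if_subset_zero) auto
  ultimately show ?thesis
    by simp
qed

lemma (in vector_space_pair) update_in_subspace_if_in_span:
  assumes "Vector_Spaces.linear s1 s2 (\<lambda>v. F (vs(k := v)))" "vs2.subspace S"
    and "\<And>v. v \<in> U \<Longrightarrow> F (vs(k := v)) \<in> S" "vs k \<in> vs1.span U"
  shows "F vs \<in> S"
proof -
  have "(\<lambda>v. F (vs(k := v))) ` U \<subseteq> S"
    using assms(3) by blast
  then have "vs2.span ((\<lambda>v. F (vs(k := v))) ` U) \<subseteq> S"
    using assms(2) by (rule vs2.span_minimal)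
  then have "(\<lambda>v. F (vs(k := v))) ` vs1.span U \<subseteq> S"
    by (simp only: linear_span_image[OF assms(1)])
  then have "F (vs(k := vs k)) \<in> S"
    using assms(4) by (rule subsetD[OF _ imageI])
  then show ?thesis
    by simp
qed

lemma (in vector_space_pair) multilinear_in_subspace_if_in_span:
  fixes F :: "(nat \<Rightarrow> 'b) \<Rightarrow> 'c" and j :: nat
  assumes lin: "\<And>vs k. k < j \<Longrightarrow> Vector_Spaces.linear s1 s2 (\<lambda>v. F (vs(k := v)))"
    and S: "vs2.subspace S"
    and gen: "\<And>vs. \<forall>a<j. vs a \<in> U \<Longrightarrow> F vs \<in> S"
    and vs: "\<forall>a<j. vs a \<in> vs1.span U"
  shows "F vs \<in> S"
proof -
  have "\<forall>vs. (\<forall>a<j. vs a \<in> vs1.span U) \<longrightarrow> (\<forall>a<j. k \<le> a \<longrightarrow> vs a \<in> U) \<longrightarrow> F vs \<in> S" for k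
  proof (induction k)
    case 0
    show ?case
      using gen by simp
  next
    case (Suc k)
    show ?case
    proof (intro allI impI)
      fix vs assume span: "\<forall>a<j. vs a \<in> vs1.span U" and gens: "\<forall>a<j. Suc k \<le> a \<longrightarrow> vs a \<in> U"
      show "F vs \<in> S"
      proof (cases "k < j")
        case False
        then have "\<forall>a<j. k \<le> a \<longrightarrow> vs a \<in> U"
          by simp
        then show ?thesis
          using Suc.IH span by blast
      next
        case True
        show ?thesis
        proof (rule update_in_subspace_if_in_span[OF lin[OF True] S])
          fix v assume v: "v \<in> U"
          have "\<forall>a<j. (vs(k := v)) a \<in> vs1.span U"
            using span v vs1.span_base[of v U] by simp
          moreover have "\<forall>a<j. k \<le> a \<longrightarrow> (vs(k := v)) a \<in> U"
            using gens v by (auto simp: Suc_le_eq le_less)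
          ultimately show "F (vs(k := v)) \<in> S"
            using Suc.IH by blast
        qed (use span True in simp)
      qed
    qed
  qed
  from this[of j] show ?thesis
    using vs by simp
qed

lemma independent_indicators:
  assumes "finite X"
  shows "fsv.independent ((\<lambda>x. indicator {x} :: 'a \<Rightarrow> 'k::field) ` X)"
proof (rule fsv.independent_if_scalars_zero)
  fix c :: "('a \<Rightarrow> 'k) \<Rightarrow> 'k" and d :: "'a \<Rightarrow> 'k"
  assume sum: "(\<Sum>e\<in>(\<lambda>x. indicator {x}) ` X. fscale (c e) e) = 0"
    and d: "d \<in> (\<lambda>x. indicator {x}) ` X"
  then obtain p where p: "d = indicator {p}"
    by blast
  have eval: "e p = (if e = d then 1 else 0)" if "e \<in> (\<lambda>x. indicator {x}) ` X" for e :: "'a \<Rightarrow> 'k"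
    using that p by (auto simp: indicator_def fun_eq_iff)
  have "(\<Sum>e\<in>(\<lambda>x. indicator {x}) ` X. fscale (c e) e) p
      = (\<Sum>e\<in>(\<lambda>x. indicator {x}) ` X. if e = d then c e else 0)"
    unfolding sum_fun_apply fscale_apply by (rule sum.cong[OF refl]) (simp add: eval)
  also have "\<dots> = c d"
    using d assms by simp
  finally show "c d = 0"
    using sum by simp
qed (use assms in simp)

lemma in_span_indicators:
  fixes f :: "'a \<Rightarrow> 'k::field"
  assumes "finite X" "\<And>x. x \<notin> X \<Longrightarrow> f x = 0"
  shows "f \<in> fsv.span ((\<lambda>x. indicator {x}) ` X)"
proof -
  have "f y = (\<Sum>x\<in>X. fscale (f x) (indicator {x})) y" for y
    using assms by (cases "y \<in> X") (simp_all add: sum_fun_apply fscale_apply indicator_def)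
  then have "f = (\<Sum>x\<in>X. fscale (f x) (indicator {x}))"
    by blast
  also have "\<dots> \<in> fsv.span ((\<lambda>x. indicator {x}) ` X)"
    by (intro fsv.span_sum fsv.span_scale fsv.span_base) auto
  finally show ?thesis .
qed

lemma ambient_subset_span_indicators:
  "ambient n \<subseteq> fsv.span ((\<lambda>i. indicator {i}) ` {..<n} :: (nat \<Rightarrow> 'k::field) set)"
  by (auto simp: ambient_def not_less[symmetric] intro!: in_span_indicators)

lemma independent_subset_ambient_bound:
  fixes U :: "(nat \<Rightarrow> 'k::field) set"
  assumes "fsv.independent U" "U \<subseteq> ambient n"
  shows "finite U" "card U \<le> n"
proof -
  have "U \<subseteq> fsv.span ((\<lambda>i. indicator {i}) ` {..<n})"
    using assms(2) ambient_subset_span_indicators by blast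
  then have "finite U \<and> card U \<le> card ((\<lambda>i. indicator {i}) ` {..<n} :: (nat \<Rightarrow> 'k) set)"
    using fsv.independent_span_bound[OF finite_imageI[OF finite_lessThan] assms(1)] by blast
  then show "finite U" "card U \<le> n"
    using card_image_le[of "{..<n}" "\<lambda>i. indicator {i} :: nat \<Rightarrow> 'k"] by auto
qed

definition direct_sum :: "('a \<Rightarrow> ('b \<Rightarrow> 'k::field) set) \<Rightarrow> 'a set \<Rightarrow> ('a \<Rightarrow> 'b \<Rightarrow> 'k) set" where
  "direct_sum V X = {c. (\<forall>S\<in>X. c S \<in> V S) \<and> (\<forall>S. S \<notin> X \<longrightarrow> c S = 0)}"

lemma linear_component: "Vector_Spaces.linear cscale fscale (\<lambda>c :: 'a \<Rightarrow> 'b \<Rightarrow> 'k::field. c S)"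
  unfolding Vector_Spaces.linear_iff
  by (simp add: fsv.vector_space_axioms csv.vector_space_axioms cscale_component)

lemma linear_single_component: "Vector_Spaces.linear fscale cscale (\<lambda>v :: 'b \<Rightarrow> 'k::field. 0(S := v))"
  unfolding Vector_Spaces.linear_iff
  by (simp add: fsv.vector_space_axioms csv.vector_space_axioms fun_eq_iff cscale_component)

lemma subspace_direct_sum: "(\<And>S. S \<in> X \<Longrightarrow> fsv.subspace (V S)) \<Longrightarrow> csv.subspace (direct_sum V X)"
  unfolding csv.subspace_def fsv.subspace_def direct_sum_def by (auto simp: cscale_component)

lemma direct_sum_subset_span:
  assumes "finite X" "\<And>S. S \<in> X \<Longrightarrow> V S \<subseteq> fsv.span (B S)"
  shows "direct_sum V X \<subseteq> csv.span (\<Union>S\<in>X. (\<lambda>v. 0(S := v)) ` B S)"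
proof
  fix c assume c: "c \<in> direct_sum V X"
  have "0(S := c S) \<in> csv.span (\<Union>S\<in>X. (\<lambda>v. 0(S := v)) ` B S)" if "S \<in> X" for S
  proof -
    have "0(S := c S) \<in> (\<lambda>v. 0(S := v)) ` fsv.span (B S)"
      using c that assms(2) by (auto simp: direct_sum_def)
    also have "\<dots> = csv.span ((\<lambda>v. 0(S := v)) ` B S)"
      by (rule fc.linear_span_image[OF linear_single_component, symmetric])
    also have "\<dots> \<subseteq> csv.span (\<Union>S\<in>X. (\<lambda>v. 0(S := v)) ` B S)"
      using that by (intro csv.span_mono) auto
    finally show ?thesis .
  qed
  moreover have "c = (\<Sum>S\<in>X. 0(S := c S))"
  proof
    fix T
    have "(\<Sum>S\<in>X. 0(S := c S)) T = (\<Sum>S\<in>X. if T = S then c S else 0)"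
      unfolding sum_fun_apply[where i = T] by (rule sum.cong) auto
    then show "c T = (\<Sum>S\<in>X. 0(S := c S)) T"
      using c assms(1) by (simp add: direct_sum_def)
  qed
  ultimately show "c \<in> csv.span (\<Union>S\<in>X. (\<lambda>v. 0(S := v)) ` B S)"
    using csv.span_sum[of X "\<lambda>S. 0(S := c S)"] by simp
qed

lemma component_image_direct_sum:
  assumes "S0 \<in> X" "\<And>S. S \<in> X \<Longrightarrow> fsv.subspace (V S)"
  shows "(\<lambda>c. c S0) ` direct_sum V X = V S0"
proof
  show "(\<lambda>c. c S0) ` direct_sum V X \<subseteq> V S0"
    using assms(1) by (auto simp: direct_sum_def)
  show "V S0 \<subseteq> (\<lambda>c. c S0) ` direct_sum V X"
  proof
    fix v assume "v \<in> V S0"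
    then have "0(S0 := v) \<in> direct_sum V X"
      using assms fsv.subspace_0 by (auto simp: direct_sum_def)
    then show "v \<in> (\<lambda>c. c S0) ` direct_sum V X"
      by (rule rev_image_eqI) simp
  qed
qed

lemma dim_direct_sum:
  assumes "finite X" "\<And>S. S \<in> X \<Longrightarrow> fsv.subspace (V S)"
    and "\<And>S. S \<in> X \<Longrightarrow> finite (B S) \<and> V S \<subseteq> fsv.span (B S)"
  shows "csv.dim (direct_sum V X) = (\<Sum>S\<in>X. fsv.dim (V S))"
  using assms
proof (induction X rule: finite_induct)
  case empty
  have "direct_sum V {} = {0}"
    by (auto simp: direct_sum_def fun_eq_iff)
  then show ?case
    by (simp add: csv.dim_le_0_if_subset_zero)
next
  case (insert S0 X)
  let ?Q = "direct_sum V (insert S0 X)"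
  have "{c \<in> ?Q. c S0 = 0} = direct_sum V X"
    using insert.hyps(2) fsv.subspace_0[OF insert.prems(1)] by (force simp: direct_sum_def)
  moreover have "fsv.dim ((\<lambda>c. c S0) ` ?Q) + csv.dim {c \<in> ?Q. c S0 = 0} = csv.dim ?Q"
  proof (rule cf.dim_image_add_dim_kernel[OF linear_component])
    show "csv.subspace ?Q"
      using insert.prems(1) by (rule subspace_direct_sum)
    show "finite (\<Union>S\<in>insert S0 X. (\<lambda>v. 0(S := v)) ` B S)"
      using insert.hyps(1) insert.prems(2) by blast
    show "?Q \<subseteq> csv.span (\<Union>S\<in>insert S0 X. (\<lambda>v. 0(S := v)) ` B S)"
      using insert.hyps(1) insert.prems(2) by (intro direct_sum_subset_span) auto
  qed
  moreover have "csv.dim (direct_sum V X) = (\<Sum>S\<in>X. fsv.dim (V S))"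
    using insert.IH insert.prems by blast
  ultimately show ?case
    using insert.hyps component_image_direct_sum[of S0 "insert S0 X" V] insert.prems(1) by simp
qed

section \<open>Exterior powers\<close>

abbreviation subsets_of_card :: "nat \<Rightarrow> nat \<Rightarrow> nat set set" where
  "subsets_of_card m j \<equiv> {J. J \<subseteq> {..<m} \<and> card J = j}"

lemma finite_subsets_of_card [simp]: "finite (subsets_of_card m j)"
  by (rule finite_subset[of _ "Pow {..<m}"]) auto

lemma sum_Pow_by_card: "(\<Sum>S\<in>Pow {..<N}. f S) = (\<Sum>m\<le>N. \<Sum>S\<in>subsets_of_card N m. f S)"
proof -
  have "card ` Pow {..<N} \<subseteq> {..N}"
    using card_mono[OF finite_lessThan] by fastforce
  then show ?thesis
    by (subst sum.group[symmetric, of "Pow {..<N}" "{..N}" card]) (auto simp: Pow_def intro!: sum.cong)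
qed

lemma nth_sorted_list_of_set_mem: "finite J \<Longrightarrow> a < card J \<Longrightarrow> sorted_list_of_set J ! a \<in> J"
  by (metis nth_mem length_sorted_list_of_set set_sorted_list_of_set)

lemma wedge_eq_det:
  assumes "I \<subseteq> {..<n}" "card I = j"
  shows "wedge n j vs I = det (mat j j (\<lambda>(a, b). vs a (sorted_list_of_set I ! b)))"
proof -
  have "(\<Prod>a<j. vs a (sorted_list_of_set I ! p a))
      = (\<Prod>a = 0..<j. mat j j (\<lambda>(a, b). vs a (sorted_list_of_set I ! b)) $$ (a, p a))"
    if "p permutes {..<j}" for p
    using that by (auto simp: atLeast0LessThan permutes_in_image intro: prod.cong)
  then show ?thesis
    using assms by (simp add: wedge_def det_def atLeast0LessThan)
qed

lemma wedge_eq_0: "\<not> (I \<subseteq> {..<n} \<and> card I = j) \<Longrightarrow> wedge n j vs I = 0"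
  unfolding wedge_def by (rule if_not_P)

lemma wedge_cong: "(\<And>a. a < j \<Longrightarrow> vs a = vs' a) \<Longrightarrow> wedge n j vs = wedge n j vs'"
  by (auto simp: wedge_def fun_eq_iff intro!: sum.cong prod.cong)

lemma wedge_permute:
  assumes \<pi>: "\<pi> permutes {..<j}"
  shows "wedge n j (vs \<circ> \<pi>) = fscale (of_int (sign \<pi>)) (wedge n j vs)"
proof
  fix I
  show "wedge n j (vs \<circ> \<pi>) I = fscale (of_int (sign \<pi>)) (wedge n j vs) I"
  proof (cases "I \<subseteq> {..<n} \<and> card I = j")
    case True
    define A where "A = mat j j (\<lambda>(a, b). vs a (sorted_list_of_set I ! b))"
    have "\<pi> a < j" if "a < j" for a
      using permutes_in_image[OF \<pi>] that by simp
    then have "mat j j (\<lambda>(a, b). (vs \<circ> \<pi>) a (sorted_list_of_set I ! b)) = mat j j (\<lambda>(a, b). A $$ (\<pi> a, b))"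
      by (intro eq_matI) (auto simp: A_def)
    moreover have "det (mat j j (\<lambda>(a, b). A $$ (\<pi> a, b))) = of_int (sign \<pi>) * det A"
      using \<pi> by (intro det_permute_rows) (auto simp: A_def atLeast0LessThan)
    ultimately show ?thesis
      using True by (simp add: wedge_eq_det A_def fscale_apply)
  qed (simp add: wedge_eq_0 fscale_apply)
qed

lemma wedge_eq_0_if_repeated:
  assumes "a < j" "b < j" "a \<noteq> b" "vs a = vs b"
  shows "wedge n j vs = 0"
proof
  fix I
  show "wedge n j vs I = 0 I"
  proof (cases "I \<subseteq> {..<n} \<and> card I = j")
    case True
    then show ?thesis
      using assms by (simp add: wedge_eq_det det_identical_rows[of _ j a b] row_mat)
  qed (simp add: wedge_eq_0)
qed

lemma wedge_eq_0_if_zero_arg: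
  assumes "a < j" "\<And>i. i \<in> I \<Longrightarrow> vs a i = 0"
  shows "wedge n j vs I = 0"
proof (cases "I \<subseteq> {..<n} \<and> card I = j")
  case True
  have "(\<Prod>b<j. vs b (sorted_list_of_set I ! p b)) = 0" if "p permutes {..<j}" for p
  proof (rule prod_zero)
    have "p a < card I"
      using permutes_in_image[OF that] assms(1) True by simp
    then have "sorted_list_of_set I ! p a \<in> I"
      using True finite_subset[of I "{..<n}"] by (auto intro: nth_sorted_list_of_set_mem)
    then show "\<exists>b\<in>{..<j}. vs b (sorted_list_of_set I ! p b) = 0"
      using assms by blast
  qed simp
  then show ?thesis
    using True unfolding wedge_def by (auto intro!: sum.neutral)
qed (simp add: wedge_eq_0)

lemma linear_wedge_update:
  assumes k: "k < j"
  shows "Vector_Spaces.linear fscale fscale (\<lambda>v. wedge n j (vs(k := v)) :: nat set \<Rightarrow> 'k::field)"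
proof -
  define R where "R I p = (\<Prod>a\<in>{..<j} - {k}. vs a (sorted_list_of_set I ! p a))" for I p
  have expand: "wedge n j (vs(k := v)) I = (if I \<subseteq> {..<n} \<and> card I = j
      then \<Sum>p | p permutes {..<j}. of_int (sign p) * (v (sorted_list_of_set I ! p k) * R I p) else 0)"
    for v I
  proof -
    have "(\<Prod>a<j. (vs(k := v)) a (sorted_list_of_set I ! p a)) = v (sorted_list_of_set I ! p k) * R I p" for p
    proof -
      have "(\<Prod>a\<in>{..<j} - {k}. (vs(k := v)) a (sorted_list_of_set I ! p a)) = R I p"
        unfolding R_def by (rule prod.cong) auto
      then show ?thesis
        using k by (simp add: prod.remove[of "{..<j}" k] fun_upd_same del: fun_upd_apply)
    qed
    then show ?thesis
      by (simp add: wedge_def)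
  qed
  show ?thesis
    unfolding Vector_Spaces.linear_iff
    by (simp add: fsv.vector_space_axioms expand fun_eq_iff fscale_apply sum.distrib sum_distrib_left algebra_simps)
qed

lemma ex_permutes_sorted_list_of_set_image:
  assumes "inj_on g {..<j}"
  obtains \<pi> where "\<pi> permutes {..<j}" "\<And>a. a < j \<Longrightarrow> sorted_list_of_set (g ` {..<j}) ! \<pi> a = g a"
proof -
  define s where "s = sorted_list_of_set (g ` {..<j})"
  have s: "bij_betw ((!) s) {..<j} (g ` {..<j})"
    using assms by (intro bij_betw_nth) (auto simp: s_def card_image)
  define \<pi> where "\<pi> a = (if a < j then the_inv_into {..<j} ((!) s) (g a) else a)" for a
  have "bij_betw (the_inv_into {..<j} ((!) s) \<circ> g) {..<j} {..<j}"
    using inj_on_imp_bij_betw[OF assms] bij_betw_the_inv_into[OF s] by (rule bij_betw_trans)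
  then have "bij_betw \<pi> {..<j} {..<j}"
    by (rule bij_betw_cong[THEN iffD1, rotated]) (simp add: \<pi>_def)
  then have "\<pi> permutes {..<j}"
    by (rule bij_imp_permutes) (simp add: \<pi>_def)
  moreover have "s ! \<pi> a = g a" if "a < j" for a
    using that f_the_inv_into_f_bij_betw[OF s] by (simp add: \<pi>_def)
  ultimately show ?thesis
    using that by (simp add: s_def)
qed

definition wedge_subfamily :: "nat \<Rightarrow> (nat \<Rightarrow> nat \<Rightarrow> 'k::field) \<Rightarrow> nat set \<Rightarrow> nat set \<Rightarrow> 'k" where
  "wedge_subfamily n u J = wedge n (card J) (\<lambda>a. u (sorted_list_of_set J ! a))"

lemma wedge_in_span_wedge_subfamily_of_generators:
  assumes vs: "\<forall>a<j. vs a \<in> u ` {..<m}"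
  shows "wedge n j vs \<in> fsv.span (wedge_subfamily n u ` subsets_of_card m j)"
proof -
  have "\<forall>a. \<exists>i. a < j \<longrightarrow> i < m \<and> vs a = u i"
    using vs by blast
  then obtain g where g: "\<And>a. a < j \<Longrightarrow> g a < m \<and> vs a = u (g a)"
    by metis
  then have vs_g: "wedge n j vs = wedge n j (u \<circ> g)"
    by (intro wedge_cong) auto
  show ?thesis
  proof (cases "inj_on g {..<j}")
    case False
    then obtain a b where "a < j" "b < j" "a \<noteq> b" "g a = g b"
      by (auto simp: inj_on_def)
    then have "wedge n j vs = 0"
      using vs_g wedge_eq_0_if_repeated[of a j b "u \<circ> g"] by simp
    then show ?thesis
      by (simp add: fsv.span_zero)
  next
    case True
    define J where "J = g ` {..<j}"
    have J: "J \<subseteq> {..<m}" "card J = j"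
      using g True by (auto simp: J_def card_image)
    obtain \<pi> where \<pi>: "\<pi> permutes {..<j}" "\<And>a. a < j \<Longrightarrow> sorted_list_of_set J ! \<pi> a = g a"
      using ex_permutes_sorted_list_of_set_image[OF True] unfolding J_def by blast
    then have "wedge n j vs = wedge n j ((\<lambda>b. u (sorted_list_of_set J ! b)) \<circ> \<pi>)"
      using vs_g by (auto intro: wedge_cong)
    also have "\<dots> = fscale (of_int (sign \<pi>)) (wedge_subfamily n u J)"
      using J by (simp add: wedge_permute[OF \<pi>(1)] wedge_subfamily_def)
    finally show ?thesis
      using J by (auto intro: fsv.span_scale fsv.span_base)
  qed
qed

lemma wedge_in_span_wedge_subfamily:
  assumes "\<forall>a<j. vs a \<in> fsv.span (u ` {..<m})"
  shows "wedge n j vs \<in> fsv.span (wedge_subfamily n u ` subsets_of_card m j)"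
  using linear_wedge_update fsv.subspace_span wedge_in_span_wedge_subfamily_of_generators assms
  by (rule ff.multilinear_in_subspace_if_in_span)

lemma wedge_subfamily_indicators:
  assumes J: "J \<subseteq> {..<n}"
  shows "wedge_subfamily n (\<lambda>i. indicator {i}) J = (indicator {J} :: nat set \<Rightarrow> 'k::field)"
proof
  fix I
  define j where "j = card J"
  define s where "s = sorted_list_of_set J"
  have "finite J"
    using J finite_subset by blast
  then have s: "length s = j" "distinct s" "set s = J"
    by (simp_all add: s_def j_def)
  consider "I = J" | "I \<subseteq> {..<n}" "card I = j" "I \<noteq> J" | "\<not> (I \<subseteq> {..<n} \<and> card I = j)"
    using J by (auto simp: j_def)
  then show "wedge_subfamily n (\<lambda>i. indicator {i}) J I = (indicator {J} I :: 'k)"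
  proof cases
    case 1
    have "mat j j (\<lambda>(a, b). indicator {s ! a} (s ! b)) = (1\<^sub>m j :: 'k mat)"
      using s by (auto simp: indicator_def nth_eq_iff_index_eq)
    then show ?thesis
      using 1 J by (simp add: wedge_subfamily_def wedge_eq_det s_def j_def)
  next
    case 2
    then have "\<not> J \<subseteq> I"
      using card_subset_eq[of I J] J finite_subset by (auto simp: j_def)
    then obtain a where "a < j" "s ! a \<notin> I"
      using s by (metis in_set_conv_nth subsetI)
    then have "wedge n j (\<lambda>b. indicator {s ! b}) I = (0 :: 'k)"
      by (intro wedge_eq_0_if_zero_arg) (auto simp: indicator_def)
    then show ?thesis
      using 2 by (simp add: wedge_subfamily_def s_def j_def)
  next
    case 3
    moreover from 3 J have "I \<noteq> J"
      by (auto simp: j_def)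
    ultimately show ?thesis
      by (simp add: wedge_subfamily_def wedge_eq_0 j_def)
  qed
qed

lemma subspace_ext_pow: "fsv.subspace (ext_pow n j W)"
  by (simp add: ext_pow_def)

lemma ext_pow_subset_span_indicators:
  "ext_pow n j W \<subseteq> fsv.span ((\<lambda>J. indicator {J}) ` subsets_of_card n j :: (nat set \<Rightarrow> 'k::field) set)"
  unfolding ext_pow_def by (intro fsv.span_minimal) (auto intro!: in_span_indicators wedge_eq_0)

lemma ext_pow_eq_span_wedge_subfamily:
  assumes "u ` {..<d} \<subseteq> W" "W \<subseteq> fsv.span (u ` {..<d})"
  shows "ext_pow n j W = fsv.span (wedge_subfamily n u ` subsets_of_card d j)"
proof
  show "ext_pow n j W \<subseteq> fsv.span (wedge_subfamily n u ` subsets_of_card d j)"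
    unfolding ext_pow_def using assms(2)
    by (intro fsv.span_minimal) (auto intro!: wedge_in_span_wedge_subfamily)
  have "wedge_subfamily n u J \<in> {wedge n j vs |vs. \<forall>a<j. vs a \<in> W}" if J: "J \<in> subsets_of_card d j" for J
  proof -
    have "sorted_list_of_set J ! a \<in> J" if "a < j" for a
      using J that finite_subset[of J "{..<d}"] by (auto intro: nth_sorted_list_of_set_mem)
    then show ?thesis
      using J assms(1) unfolding wedge_subfamily_def by blast
  qed
  then show "fsv.span (wedge_subfamily n u ` subsets_of_card d j) \<subseteq> ext_pow n j W"
    unfolding ext_pow_def by (intro fsv.span_mono) blast
qed

lemma indicator_in_span_wedge_subfamily:
  assumes "ambient n \<subseteq> fsv.span (u ` {..<m})" "J \<in> subsets_of_card n j"
  shows "(indicator {J} :: nat set \<Rightarrow> 'k::field) \<in> fsv.span (wedge_subfamily n u ` subsets_of_card m j)"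
proof -
  have "\<forall>a<j. indicator {sorted_list_of_set J ! a} \<in> (ambient n :: (nat \<Rightarrow> 'k) set)"
    using assms(2) finite_subset[of J "{..<n}"] nth_sorted_list_of_set_mem[of J]
    by (fastforce simp: ambient_def indicator_def)
  then have "\<forall>a<j. indicator {sorted_list_of_set J ! a} \<in> fsv.span (u ` {..<m})"
    using assms(1) by blast
  then have "wedge n j (\<lambda>a. indicator {sorted_list_of_set J ! a}) \<in> fsv.span (wedge_subfamily n u ` subsets_of_card m j)"
    by (rule wedge_in_span_wedge_subfamily)
  moreover have "wedge n j (\<lambda>a. indicator {sorted_list_of_set J ! a}) = (indicator {J} :: nat set \<Rightarrow> 'k)"
    using assms(2) wedge_subfamily_indicators[of J n] by (simp add: wedge_subfamily_def)
  ultimately show ?thesis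
    by simp
qed

(* The (m choose j) wedges of the basis span the (n choose j) independent coordinate vectors
   of Lambda^j V, and m <= n; counting forces them to be independent and pairwise distinct. *)
lemma independent_wedge_subfamily_of_basis:
  fixes u :: "nat \<Rightarrow> nat \<Rightarrow> 'k::field"
  assumes u: "inj_on u {..<m}" "fsv.independent (u ` {..<m})"
    and basis: "u ` {..<m} \<subseteq> ambient n" "ambient n \<subseteq> fsv.span (u ` {..<m})"
  shows "inj_on (wedge_subfamily n u) (subsets_of_card m j)"
    and "fsv.independent (wedge_subfamily n u ` subsets_of_card m j)"
proof -
  define G where "G = wedge_subfamily n u ` subsets_of_card m j"
  define E :: "(nat set \<Rightarrow> 'k) set" where "E = (\<lambda>J. indicator {J}) ` subsets_of_card n j"
  have "m \<le> n"
    using independent_subset_ambient_bound(2)[OF u(2) basis(1)] card_image[OF u(1)] by simp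
  have "inj_on (\<lambda>J. indicator {J} :: nat set \<Rightarrow> 'k) (subsets_of_card n j)"
    by (auto simp: inj_on_def indicator_def fun_eq_iff split: if_splits)
  then have card_E: "card E = n choose j"
    by (simp add: E_def card_image n_subsets)
  have E_G: "E \<subseteq> fsv.span G"
    using indicator_in_span_wedge_subfamily[OF basis(2)] by (auto simp: E_def G_def)
  have ind_E: "fsv.independent E"
    unfolding E_def by (rule independent_indicators) simp
  have "card G \<le> m choose j"
    using card_image_le[of "subsets_of_card m j" "wedge_subfamily n u"] by (simp add: G_def n_subsets)
  also have "\<dots> \<le> card E"
    using \<open>m \<le> n\<close> card_E by (simp add: binomial_right_mono)
  finally show "fsv.independent G"
    using fsv.independent_if_span_contains_independent[OF _ E_G ind_E] by (simp add: G_def)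
  have "card E \<le> card G"
    using fsv.independent_span_bound[OF _ ind_E E_G] by (simp add: G_def)
  then have "card G = card (subsets_of_card m j)"
    using \<open>card G \<le> m choose j\<close> \<open>m choose j \<le> card E\<close> by (simp add: n_subsets)
  then show "inj_on (wedge_subfamily n u) (subsets_of_card m j)"
    unfolding G_def by (rule eq_card_imp_inj_on[OF finite_subsets_of_card])
qed

lemma ambient_basis_extending_basis:
  fixes W :: "(nat \<Rightarrow> 'k::field) set"
  assumes "W \<subseteq> ambient n"
  obtains u :: "nat \<Rightarrow> nat \<Rightarrow> 'k" and m d where
    "inj_on u {..<m}" "fsv.independent (u ` {..<m})"
    "u ` {..<m} \<subseteq> ambient n" "ambient n \<subseteq> fsv.span (u ` {..<m})"
    "d \<le> m" "u ` {..<d} \<subseteq> W" "W \<subseteq> fsv.span (u ` {..<d})" "d = fsv.dim W"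
proof -
  obtain BW where BW: "BW \<subseteq> W" "fsv.independent BW" "W \<subseteq> fsv.span BW" "card BW = fsv.dim W"
    by (rule fsv.basis_exists)
  obtain B where B: "BW \<subseteq> B" "B \<subseteq> ambient n" "fsv.independent B" "ambient n \<subseteq> fsv.span B"
    using fsv.maximal_independent_subset_extend[of BW "ambient n"] BW assms by blast
  have "finite B"
    using independent_subset_ambient_bound(1)[OF B(3,2)] .
  obtain ys zs where ys: "distinct ys" "set ys = BW" and zs: "distinct zs" "set zs = B - BW"
    using finite_distinct_list \<open>finite B\<close> B(1) by (metis finite_Diff finite_subset)
  define xs where "xs = ys @ zs"
  have "(!) xs ` {..<length xs} = set xs" "(!) xs ` {..<length ys} = set ys"
    by (simp_all add: lessThan_atLeast0 nth_image xs_def)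
  moreover have "set xs = B"
    using ys zs B(1) by (auto simp: xs_def)
  moreover have "distinct xs"
    using ys zs by (simp add: xs_def)
  ultimately have "inj_on ((!) xs) {..<length xs}" "(!) xs ` {..<length xs} = B" "(!) xs ` {..<length ys} = BW"
    using ys by (simp_all add: inj_on_nth)
  moreover have "length ys \<le> length xs" "length ys = fsv.dim W"
    using ys BW(4) distinct_card[of ys] by (simp_all add: xs_def)
  ultimately show ?thesis
    using that[of "(!) xs" "length xs" "length ys"] B BW by simp
qed

lemma dim_ext_pow:
  fixes W :: "(nat \<Rightarrow> 'k::field) set"
  assumes "W \<subseteq> ambient n"
  shows "fsv.dim (ext_pow n j W) = fsv.dim W choose j"
proof -
  obtain u :: "nat \<Rightarrow> nat \<Rightarrow> 'k" and m d where u: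
    "inj_on u {..<m}" "fsv.independent (u ` {..<m})"
    "u ` {..<m} \<subseteq> ambient n" "ambient n \<subseteq> fsv.span (u ` {..<m})"
    and d: "d \<le> m" "u ` {..<d} \<subseteq> W" "W \<subseteq> fsv.span (u ` {..<d})" "d = fsv.dim W"
    using ambient_basis_extending_basis[OF assms] by blast
  have span_eq: "ext_pow n j W = fsv.span (wedge_subfamily n u ` subsets_of_card d j)"
    using d by (intro ext_pow_eq_span_wedge_subfamily)
  have sub: "subsets_of_card d j \<subseteq> subsets_of_card m j"
    using d(1) by auto
  note basis = independent_wedge_subfamily_of_basis[OF u, of j]
  have "fsv.dim (ext_pow n j W) = card (wedge_subfamily n u ` subsets_of_card d j)"
    unfolding span_eq
    by (rule fsv.dim_span_eq_card_independent[OF fsv.independent_mono[OF basis(2) image_mono[OF sub]]])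
  also have "\<dots> = fsv.dim W choose j"
    using card_image[OF inj_on_subset[OF basis(1) sub]] d(4) by (simp add: n_subsets)
  finally show ?thesis .
qed

section \<open>Chains of the Boolean cover\<close>

lemma isect_subset_ambient: "isect n as S \<subseteq> ambient n"
  by (auto simp: isect_def)

lemma chains_eq_direct_sum:
  "chains n as j m = direct_sum (\<lambda>S. ext_pow n j (isect n as S)) (subsets_of_card (length as) m)"
  by (auto simp: chains_def direct_sum_def)

lemma chains_finite_dimensional:
  fixes as :: "(nat \<Rightarrow> 'k::field) set list"
  shows "csv.subspace (chains n as j m) \<and> (\<exists>B. finite B \<and> chains n as j m \<subseteq> csv.span B)"
proof -
  let ?E = "(\<lambda>J. indicator {J}) ` subsets_of_card n j :: (nat set \<Rightarrow> 'k) set"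
  let ?B = "\<Union>S\<in>subsets_of_card (length as) m. (\<lambda>v. 0(S := v)) ` ?E"
  have "chains n as j m \<subseteq> csv.span ?B"
    unfolding chains_eq_direct_sum by (intro direct_sum_subset_span ext_pow_subset_span_indicators) simp
  moreover have "csv.subspace (chains n as j m)"
    unfolding chains_eq_direct_sum by (intro subspace_direct_sum subspace_ext_pow)
  moreover have "finite ?B"
    by simp
  ultimately show ?thesis
    by blast
qed

lemma dim_chains:
  "csv.dim (chains n as j m) = (\<Sum>S\<in>subsets_of_card (length as) m. subspace_dim (isect n as S) choose j)"
  unfolding chains_eq_direct_sum subspace_dim_def
  by (subst dim_direct_sum[where B = "\<lambda>_. (\<lambda>J. indicator {J}) ` subsets_of_card n j"])
    (simp_all add: subspace_ext_pow ext_pow_subset_span_indicators dim_ext_pow[OF isect_subset_ambient])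

lemma linear_bdry: "Vector_Spaces.linear cscale cscale (bdry N :: (nat set \<Rightarrow> nat set \<Rightarrow> 'k::field) \<Rightarrow> _)"
  unfolding Vector_Spaces.linear_iff
  by (simp add: csv.vector_space_axioms fun_eq_iff bdry_def cscale_def sum.distrib sum_distrib_left algebra_simps)

lemma euler_coeff_eq_alternating_sum_dim_chains:
  "euler_coeff n as j = (\<Sum>m\<le>length as. (-1) ^ m * int (csv.dim (chains n as j m)))"
  unfolding euler_coeff_def homology_dim_def cycles_def boundaries_def
proof (rule csv.alternating_sum_dim_homology[OF linear_bdry])
  show "csv.subspace (chains n as j m)" "\<exists>B. finite B \<and> chains n as j m \<subseteq> csv.span B" for m
    using chains_finite_dimensional by blast+
  show "bdry (length as) c = 0" if "c \<in> chains n as j 0" for c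
  proof -
    have "c (insert i T) = 0" for i T
      using that finite_subset[of "insert i T" "{..<length as}"] by (auto simp: chains_def card_gt_0_iff)
    then show ?thesis
      by (simp add: bdry_def fun_eq_iff)
  qed
  have "\<not> (S \<subseteq> {..<length as} \<and> card S = Suc (length as))" for S
    using card_mono[of "{..<length as}" S] by auto
  then show "chains n as j (Suc (length as)) \<subseteq> {0}"
    by (auto simp: chains_def fun_eq_iff)
qed

section \<open>The M\<ouml>bius function of the intersection lattice\<close>

(* Qualified because HOL-Algebra's lattice predicate is also in scope. *)
lemma finite_lattice: "finite (Defs.lattice n as)"
  by (simp add: Defs.lattice_def)

lemma mobius_recursion_unique:
  fixes m1 m2 :: "'a set \<Rightarrow> 'b::ring_1"
  assumes "finite L"
    and m1: "(\<forall>y. y \<notin> L \<longrightarrow> m1 y = 0) \<and>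
      (\<forall>y\<in>L. m1 y = (if y = V then 1 else - (\<Sum>z\<in>{z\<in>L. y \<subset> z}. m1 z)))"
    and m2: "(\<forall>y. y \<notin> L \<longrightarrow> m2 y = 0) \<and>
      (\<forall>y\<in>L. m2 y = (if y = V then 1 else - (\<Sum>z\<in>{z\<in>L. y \<subset> z}. m2 z)))"
  shows "m1 = m2"
proof
  fix y
  show "m1 y = m2 y"
  proof (induction y rule: measure_induct_rule[where f = "\<lambda>y. card {z\<in>L. y \<subset> z}"])
    case (less y)
    have "m1 z = m2 z" if "z \<in> {z\<in>L. y \<subset> z}" for z
    proof (rule less.IH)
      have "{z'\<in>L. z \<subset> z'} \<subset> {z'\<in>L. y \<subset> z'}"
        using that by auto
      then show "card {z'\<in>L. z \<subset> z'} < card {z'\<in>L. y \<subset> z'}"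
        using assms(1) by (simp add: psubset_card_mono)
    qed
    then have "(\<Sum>z\<in>{z\<in>L. y \<subset> z}. m1 z) = (\<Sum>z\<in>{z\<in>L. y \<subset> z}. m2 z)"
      by (rule sum.cong[OF refl])
    then show ?case
      using m1 m2 by (cases "y \<in> L") simp_all
  qed
qed

lemma alternating_sum_Pow_eq_0:
  assumes "finite A" "A \<noteq> {}"
  shows "(\<Sum>S\<in>Pow A. (-1::int) ^ card S) = 0"
proof (rule sum_alternating_cancels)
  show "card {S. S \<in> Pow A \<and> even (card S)} = card {S. S \<in> Pow A \<and> odd (card S)}"
    using card_subsupersets_even_odd[of A "{}"] assms by auto
qed (use assms in simp)

lemma hyperplane_proper:
  assumes "hyperplane n H"
  shows "\<not> ambient n \<subseteq> H"
proof
  obtain a where a: "a \<in> ambient n" "a \<noteq> 0" "H = {v \<in> ambient n. (\<Sum>i<n. a i * v i) = 0}"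
    using assms by (auto simp: hyperplane_def)
  then obtain k where k: "a k \<noteq> 0"
    by (auto simp: fun_eq_iff)
  with a(1) have "k < n"
    by (auto simp: ambient_def not_le[symmetric])
  then have "(\<Sum>i<n. a i * indicator {k} i) \<noteq> 0"
    using k by (simp add: indicator_def if_distrib cong: sum.cong)
  moreover assume "ambient n \<subseteq> H"
  then have "indicator {k} \<in> H"
    using \<open>k < n\<close> by (auto simp: ambient_def)
  ultimately show False
    using a(3) \<open>k < n\<close> by simp
qed

lemma isect_eq_ambient_iff:
  assumes "\<And>H. H \<in> set as \<Longrightarrow> \<not> ambient n \<subseteq> H" "S \<subseteq> {..<length as}"
  shows "isect n as S = ambient n \<longleftrightarrow> S = {}"
proof
  assume "isect n as S = ambient n"
  then have "ambient n \<subseteq> as ! i" if "i \<in> S" for i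
    using that by (auto simp: isect_def)
  then show "S = {}"
    using assms nth_mem by blast
qed (simp add: isect_def)

definition whitney_mobius :: "nat \<Rightarrow> (nat \<Rightarrow> 'k::field) set list \<Rightarrow> (nat \<Rightarrow> 'k) set \<Rightarrow> int" where
  "whitney_mobius n as x = (\<Sum>S | S \<subseteq> {..<length as} \<and> isect n as S = x. (-1) ^ card S)"

lemma sum_whitney_mobius_above:
  assumes y: "y \<in> Defs.lattice n as" "y \<noteq> ambient n"
  shows "(\<Sum>z\<in>{z\<in>Defs.lattice n as. y \<subseteq> z}. whitney_mobius n as z) = 0"
proof -
  define A where "A = {i\<in>{..<length as}. y \<subseteq> as ! i}"
  let ?SS = "{S. S \<subseteq> {..<length as} \<and> y \<subseteq> isect n as S}"
  have "whitney_mobius n as z = (\<Sum>S\<in>{S\<in>?SS. isect n as S = z}. (-1) ^ card S)" if "y \<subseteq> z" for z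
    unfolding whitney_mobius_def using that by (intro sum.cong) auto
  then have "(\<Sum>z\<in>{z\<in>Defs.lattice n as. y \<subseteq> z}. whitney_mobius n as z)
      = (\<Sum>z\<in>{z\<in>Defs.lattice n as. y \<subseteq> z}. \<Sum>S\<in>{S\<in>?SS. isect n as S = z}. (-1) ^ card S)"
    by simp
  also have "\<dots> = (\<Sum>S\<in>?SS. (-1) ^ card S)"
    by (rule sum.group) (auto simp: Defs.lattice_def)
  also have "?SS = Pow A"
    using y(1) by (auto simp: A_def Defs.lattice_def isect_def)
  also have "(\<Sum>S\<in>Pow A. (-1::int) ^ card S) = 0"
  proof (rule alternating_sum_Pow_eq_0)
    obtain T where T: "T \<subseteq> {..<length as}" "y = isect n as T"
      using y(1) by (auto simp: Defs.lattice_def)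
    then have "T \<noteq> {}" "T \<subseteq> A"
      using y(2) by (auto simp: A_def isect_def)
    then show "A \<noteq> {}"
      by blast
  qed (simp add: A_def)
  finally show ?thesis .
qed

lemma whitney_mobius_recursion:
  assumes proper: "\<And>H. H \<in> set as \<Longrightarrow> \<not> ambient n \<subseteq> H"
  shows "(\<forall>y. y \<notin> Defs.lattice n as \<longrightarrow> whitney_mobius n as y = 0) \<and>
    (\<forall>y\<in>Defs.lattice n as. whitney_mobius n as y = (if y = ambient n then 1
      else - (\<Sum>z\<in>{z\<in>Defs.lattice n as. y \<subset> z}. whitney_mobius n as z)))"
proof (intro conjI allI impI ballI)
  fix y
  assume "y \<notin> Defs.lattice n as"
  then have "{S. S \<subseteq> {..<length as} \<and> isect n as S = y} = {}"
    by (auto simp: Defs.lattice_def)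
  then show "whitney_mobius n as y = 0"
    unfolding whitney_mobius_def by (simp only: sum.empty)
next
  fix y
  assume y: "y \<in> Defs.lattice n as"
  show "whitney_mobius n as y = (if y = ambient n then 1
      else - (\<Sum>z\<in>{z\<in>Defs.lattice n as. y \<subset> z}. whitney_mobius n as z))"
  proof (cases "y = ambient n")
    case True
    then have "{S. S \<subseteq> {..<length as} \<and> isect n as S = y} = {{}}"
      using isect_eq_ambient_iff[OF proper] by auto
    then show ?thesis
      using True by (simp add: whitney_mobius_def)
  next
    case False
    have "{z\<in>Defs.lattice n as. y \<subseteq> z} = insert y {z\<in>Defs.lattice n as. y \<subset> z}"
      using y by auto
    then have "whitney_mobius n as y + (\<Sum>z\<in>{z\<in>Defs.lattice n as. y \<subset> z}. whitney_mobius n as z) = 0"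
      using sum_whitney_mobius_above[OF y False] by (simp add: finite_lattice)
    then show ?thesis
      using False by (simp add: eq_neg_iff_add_eq_0)
  qed
qed

lemma mobius0_eq_whitney_mobius:
  assumes "\<And>H. H \<in> set as \<Longrightarrow> \<not> ambient n \<subseteq> H"
  shows "mobius0 n as = whitney_mobius n as"
  unfolding mobius0_def
proof (rule the_equality)
  show "(\<forall>y. y \<notin> Defs.lattice n as \<longrightarrow> whitney_mobius n as y = 0) \<and>
    (\<forall>y\<in>Defs.lattice n as. whitney_mobius n as y = (if y = ambient n then 1
      else - (\<Sum>z\<in>{z\<in>Defs.lattice n as. y \<subset> z}. whitney_mobius n as z)))"
    using assms by (rule whitney_mobius_recursion)
  show "m = whitney_mobius n as" if "(\<forall>y. y \<notin> Defs.lattice n as \<longrightarrow> m y = 0) \<and>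
    (\<forall>y\<in>Defs.lattice n as. m y = (if y = ambient n then 1
      else - (\<Sum>z\<in>{z\<in>Defs.lattice n as. y \<subset> z}. m z)))" for m
    using finite_lattice that whitney_mobius_recursion[OF assms] by (rule mobius_recursion_unique)
qed

lemma sum_Pow_isect_eq_sum_lattice_mobius0:
  fixes as :: "(nat \<Rightarrow> 'k::field) set list" and g :: "(nat \<Rightarrow> 'k) set \<Rightarrow> int"
  assumes "\<And>H. H \<in> set as \<Longrightarrow> \<not> ambient n \<subseteq> H"
  shows "(\<Sum>S\<in>Pow {..<length as}. (-1) ^ card S * g (isect n as S))
       = (\<Sum>x\<in>Defs.lattice n as. mobius0 n as x * g x)"
proof -
  have "(\<Sum>S\<in>Pow {..<length as}. (-1) ^ card S * g (isect n as S))
      = (\<Sum>x\<in>Defs.lattice n as. \<Sum>S\<in>{S\<in>Pow {..<length as}. isect n as S = x}. (-1) ^ card S * g (isect n as S))"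
    by (rule sum.group[symmetric]) (auto simp: Defs.lattice_def)
  also have "\<dots> = (\<Sum>x\<in>Defs.lattice n as. \<Sum>S\<in>{S\<in>Pow {..<length as}. isect n as S = x}. (-1) ^ card S * g x)"
    by (intro sum.cong) auto
  also have "\<dots> = (\<Sum>x\<in>Defs.lattice n as. mobius0 n as x * g x)"
    by (simp add: mobius0_eq_whitney_mobius[OF assms] whitney_mobius_def sum_distrib_right Pow_def conj_commute)
  finally show ?thesis .
qed

lemma coeff_pcompose_monom_one_plus_X:
  fixes c :: "'a::comm_semiring_1"
  shows "coeff (pcompose (monom c d) [:1, 1:]) j = c * of_nat (d choose j)"
proof -
  have "pcompose ([:0, 1:] ^ d) q = q ^ d" for q :: "'a poly"
    by (induction d) (simp_all add: pcompose_mult pcompose_pCons pcompose_1)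
  moreover have "coeff ([:1, 1:] ^ d :: 'a poly) j = of_nat (d choose j)"
    by (cases "j \<le> d") (simp_all add: coeff_linear_poly_power coeff_eq_0 degree_linear_power binomial_eq_0)
  ultimately show ?thesis
    by (simp add: monom_altdef pcompose_smult)
qed

theorem proposition6:
  fixes n :: nat and as :: "(nat \<Rightarrow> 'k::field) set list"
  assumes "arrangement n as"
  shows "\<forall>j. euler_coeff n as j = coeff (pcompose (char_poly n as) [:1, 1:]) j"
proof
  fix j
  let ?N = "length as" and ?c = "\<lambda>x. int (subspace_dim x choose j)"
  have proper: "\<And>H. H \<in> set as \<Longrightarrow> \<not> ambient n \<subseteq> H"
    using assms hyperplane_proper by (auto simp: arrangement_def)
  have "euler_coeff n as j = (\<Sum>m\<le>?N. (-1) ^ m * int (csv.dim (chains n as j m)))"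
    by (rule euler_coeff_eq_alternating_sum_dim_chains)
  also have "\<dots> = (\<Sum>m\<le>?N. \<Sum>S\<in>subsets_of_card ?N m. (-1) ^ card S * ?c (isect n as S))"
    by (simp add: dim_chains sum_distrib_left)
  also have "\<dots> = (\<Sum>S\<in>Pow {..<?N}. (-1) ^ card S * ?c (isect n as S))"
    by (rule sum_Pow_by_card[symmetric])
  also have "\<dots> = (\<Sum>x\<in>Defs.lattice n as. mobius0 n as x * ?c x)"
    by (rule sum_Pow_isect_eq_sum_lattice_mobius0[OF proper])
  also have "\<dots> = coeff (pcompose (char_poly n as) [:1, 1:]) j"
    by (simp add: char_poly_def pcompose_sum coeff_sum coeff_pcompose_monom_one_plus_X)
  finally show "euler_coeff n as j = coeff (pcompose (char_poly n as) [:1, 1:]) j" .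
qed

end
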